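(* Let $q\neq0$ be real. Let $\mathcal M$ be a binary matroid represented by a matrix $M$ over $\mathrm{GF}(2)$ with rows $V$ and columns $E$, let $\boldsymbol\gamma=\{\gamma_e\}_{e\in E}$ be real weights, and let $c\in E$. Suppose $\gamma_1>0$ and $\gamma_2>0$ satisfy $1+\frac{q}{\gamma_c}=\left(1+\frac{q}{\gamma_1}\right)\left(1+\frac{q}{\gamma_2}\right)$. Let $e'$ be a new column and define $\boldsymbol\gamma'=\{\gamma'_e\}_{e\in E\cup\{e'\}}$ by $\gamma'_{e'}=\gamma_2$, $\gamma'_c=\gamma_1$ and $\gamma'_e=\gamma_e$ for all other $e\in E$. Then there is a binary matroid $\mathcal M'$ represented by a matrix $M'$ over $\mathrm{GF}(2)$ with $|V|+1$ rows and columns $E\cup\{e'\}$ such that $\left(1+\frac{\gamma_1}{q}+\frac{\gamma_2}{q}\right)\tilde Z(\mathcal M;q,\boldsymbol\gamma)=\tilde Z(\mathcal M';q,\boldsymbol\gamma')$.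
   Context: A binary matroid represented by a matrix $M$ over $\mathrm{GF}(2)$ with rows $V$ and columns $E$ has ground set $E$ and rank function $r_{\mathcal M}(A)=$ the $\mathrm{GF}(2)$-rank of the submatrix formed by the columns in $A$. The multivariate Tutte polynomial is $\tilde Z(\mathcal M;q,\boldsymbol\gamma)=\sum_{A\subseteq E}q^{-r_{\mathcal M}(A)}\prod_{e\in A}\gamma_e$. *)

theory Defs
  imports Complex_Main
begin

text \<open>A binary matroid is given by a matrix M over GF(2), encoded as
  M :: 'v => 'e => bool (True = 1), with row set V and column set E.
  A set B of columns is linearly dependent over GF(2) iff some nonempty
  subset of B sums to the zero vector, i.e. every row has an even number
  of ones among the chosen columns.\<close>

definition gf2_indep :: "'v set \<Rightarrow> ('v \<Rightarrow> 'e \<Rightarrow> bool) \<Rightarrow> 'e set \<Rightarrow> bool" where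
  "gf2_indep V M B \<longleftrightarrow>
     \<not> (\<exists>C. C \<subseteq> B \<and> C \<noteq> {} \<and> (\<forall>v\<in>V. even (card {e\<in>C. M v e})))"

definition gf2_rank :: "'v set \<Rightarrow> ('v \<Rightarrow> 'e \<Rightarrow> bool) \<Rightarrow> 'e set \<Rightarrow> nat" where
  "gf2_rank V M A = Max {card B | B. B \<subseteq> A \<and> gf2_indep V M B}"

definition tutte_Z :: "'v set \<Rightarrow> 'e set \<Rightarrow> ('v \<Rightarrow> 'e \<Rightarrow> bool) \<Rightarrow> real \<Rightarrow> ('e \<Rightarrow> real) \<Rightarrow> real" where
  "tutte_Z V E M q \<gamma> = (\<Sum>A\<in>Pow E. inverse (q ^ gf2_rank V M A) * (\<Prod>e\<in>A. \<gamma> e))"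

end

theory Submission
  imports Defs
begin

(* The witness M' is the series extension of M at c: one new row with a 1
   exactly in the columns c and e', and the new column e' zero in all old rows.  For the
   series extension, a set is a cycle iff it meets {c, e'} evenly and is a
   cycle of M once e' is removed; hence B is independent in M' iff its
   projection (B minus e', or B minus c when e' is not in B) is independent in
   M, and r'(X) = r(proj X) + [X meets {c, e'}].  Writing the subsets of
   E + e' as A, A + c, A + e', A + c + e' with A inside E - c, their ranks are
   r(A), r(A)+1, r(A)+1, r(A+c)+1, and the hypothesis on gamma_c, gamma_1,
   gamma_2 makes these four terms of Z(M') equal (1 + gamma_1/q + gamma_2/q)
   times the terms for A and A + c of Z(M). *)

lemma sum_Pow_insert:
  assumes "finite A" "a \<notin> A"
  shows "sum f (Pow (insert a A)) = sum f (Pow A) + (\<Sum>B\<in>Pow A. f (insert a B))"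
proof -
  have "inj_on (insert a) (Pow A)"
  proof (rule inj_onI)
    fix B B' assume "B \<in> Pow A" "B' \<in> Pow A" "insert a B = insert a B'"
    hence "insert a B - {a} = insert a B' - {a}" "a \<notin> B" "a \<notin> B'" using assms(2) by auto
    thus "B = B'" by simp
  qed
  moreover have "Pow A \<inter> insert a ` Pow A = {}" using assms(2) by blast
  ultimately show ?thesis
    unfolding Pow_insert using assms(1) by (simp add: sum.union_disjoint sum.reindex)
qed

definition gf2_cycle :: "'v set \<Rightarrow> ('v \<Rightarrow> 'e \<Rightarrow> bool) \<Rightarrow> 'e set \<Rightarrow> bool" where
  "gf2_cycle V M C \<longleftrightarrow> (\<forall>v\<in>V. even (card {e\<in>C. M v e}))"

lemma gf2_indep_iff_no_cycle:
  "gf2_indep V M B \<longleftrightarrow> \<not> (\<exists>C\<subseteq>B. C \<noteq> {} \<and> gf2_cycle V M C)"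
  unfolding gf2_indep_def gf2_cycle_def by blast

lemma gf2_rank_candidates_finite:
  assumes "finite X"
  shows "finite {card B | B. B \<subseteq> X \<and> gf2_indep V M B}"
proof (rule finite_subset)
  show "{card B | B. B \<subseteq> X \<and> gf2_indep V M B} \<subseteq> card ` Pow X" by blast
  show "finite (card ` Pow X)" using assms by simp
qed

lemma gf2_rank_ge:
  assumes "finite X" "B \<subseteq> X" "gf2_indep V M B"
  shows "card B \<le> gf2_rank V M X"
  unfolding gf2_rank_def using assms
  by (intro Max_ge[OF gf2_rank_candidates_finite]) blast+

lemma gf2_rank_witness:
  assumes "finite X"
  obtains B where "B \<subseteq> X" "gf2_indep V M B" "card B = gf2_rank V M X"
proof -
  let ?S = "{card B | B. B \<subseteq> X \<and> gf2_indep V M B}"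
  have "gf2_indep V M {}" unfolding gf2_indep_def by blast
  hence "?S \<noteq> {}" by blast
  hence "Max ?S \<in> ?S" using gf2_rank_candidates_finite[OF assms] by (intro Max_in)
  moreover have "\<exists>B. B \<subseteq> X \<and> gf2_indep V M B \<and> card B = m" if "m \<in> ?S" for m
    using that by blast
  ultimately obtain B where B: "B \<subseteq> X" "gf2_indep V M B" "card B = Max ?S" by blast
  show ?thesis by (rule that[OF B(1,2)]) (simp add: B(3) gf2_rank_def)
qed

lemma gf2_rank_shift:
  assumes "finite X" "finite Y"
    and down: "\<And>B. B \<subseteq> X \<Longrightarrow> gf2_indep V' M' B \<Longrightarrow>
                  \<exists>B0\<subseteq>Y. gf2_indep V M B0 \<and> card B \<le> card B0 + k"
    and up: "\<And>B0. B0 \<subseteq> Y \<Longrightarrow> gf2_indep V M B0 \<Longrightarrow>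
                  \<exists>B\<subseteq>X. gf2_indep V' M' B \<and> card B = card B0 + k"
  shows "gf2_rank V' M' X = gf2_rank V M Y + k"
proof (rule antisym)
  obtain B where B: "B \<subseteq> X" "gf2_indep V' M' B" "card B = gf2_rank V' M' X"
    using gf2_rank_witness[OF assms(1)] .
  with down obtain B0 where B0: "B0 \<subseteq> Y" "gf2_indep V M B0" "card B \<le> card B0 + k"
    by blast
  have "gf2_rank V' M' X \<le> card B0 + k" using B(3) B0(3) by simp
  also have "\<dots> \<le> gf2_rank V M Y + k" using gf2_rank_ge[OF assms(2) B0(1,2)] by simp
  finally show "gf2_rank V' M' X \<le> gf2_rank V M Y + k" .
next
  obtain B0 where B0: "B0 \<subseteq> Y" "gf2_indep V M B0" "card B0 = gf2_rank V M Y"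
    using gf2_rank_witness[OF assms(2)] .
  with up obtain B where B: "B \<subseteq> X" "gf2_indep V' M' B" "card B = card B0 + k"
    by blast
  have "gf2_rank V M Y + k = card B" using B0(3) B(3) by simp
  also have "\<dots> \<le> gf2_rank V' M' X" using gf2_rank_ge[OF assms(1) B(1,2)] .
  finally show "gf2_rank V M Y + k \<le> gf2_rank V' M' X" .
qed

definition series_ext :: "('v \<Rightarrow> 'e \<Rightarrow> bool) \<Rightarrow> 'e \<Rightarrow> 'e \<Rightarrow> 'v option \<Rightarrow> 'e \<Rightarrow> bool" where
  "series_ext M c e' w e = (case w of None \<Rightarrow> e = c \<or> e = e' | Some v \<Rightarrow> e \<noteq> e' \<and> M v e)"

definition series_proj :: "'e \<Rightarrow> 'e \<Rightarrow> 'e set \<Rightarrow> 'e set" where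
  "series_proj c e' B = (if e' \<in> B then B - {e'} else B - {c})"

lemma series_ext_cycle:
  "gf2_cycle (insert None (Some ` V)) (series_ext M c e') C \<longleftrightarrow>
     even (card (C \<inter> {c, e'})) \<and> gf2_cycle V M (C - {e'})"
proof -
  have "{e\<in>C. series_ext M c e' (Some v) e} = {e\<in>C - {e'}. M v e}" for v
    unfolding series_ext_def by auto
  moreover have "{e\<in>C. series_ext M c e' None e} = C \<inter> {c, e'}"
    unfolding series_ext_def by auto
  ultimately show ?thesis unfolding gf2_cycle_def by auto
qed

lemma series_ext_indep:
  assumes "c \<noteq> e'"
  shows "gf2_indep (insert None (Some ` V)) (series_ext M c e') B \<longleftrightarrow>
           gf2_indep V M (series_proj c e' B)"
proof -
  let ?V' = "insert None (Some ` V)" and ?M' = "series_ext M c e'"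
  let ?P = "series_proj c e' B"
  have lift: "\<exists>C\<subseteq>B. C \<noteq> {} \<and> gf2_cycle ?V' ?M' C"
    if D: "D \<subseteq> ?P" "D \<noteq> {}" "gf2_cycle V M D" for D
  proof -
    define C where "C = (if c \<in> D then insert e' D else D)"
    have e'D: "e' \<notin> D" and cD: "c \<in> D \<Longrightarrow> e' \<in> B"
      using D(1) by (auto simp: series_proj_def split: if_splits)
    have "C \<inter> {c, e'} = (if c \<in> D then {c, e'} else {})"
      using e'D unfolding C_def by auto
    hence "even (card (C \<inter> {c, e'}))" using assms by simp
    moreover have "C - {e'} = D" using e'D unfolding C_def by auto
    moreover have "C \<subseteq> B" "C \<noteq> {}"
      using D(1,2) cD unfolding C_def by (auto simp: series_proj_def split: if_splits)
    ultimately show ?thesis using D(3) by (auto simp: series_ext_cycle)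
  qed
  have proj: "\<exists>D\<subseteq>?P. D \<noteq> {} \<and> gf2_cycle V M D"
    if C: "C \<subseteq> B" "C \<noteq> {}" "gf2_cycle ?V' ?M' C" for C
  proof -
    have even: "even (card (C \<inter> {c, e'}))" and "gf2_cycle V M (C - {e'})"
      using C(3) by (simp_all add: series_ext_cycle)
    moreover have "C - {e'} \<noteq> {}"
    proof
      assume "C - {e'} = {}"
      hence "C = {e'}" using C(2) by blast
      thus False using even by simp
    qed
    moreover have "C - {e'} \<subseteq> ?P"
    proof (cases "e' \<in> B")
      case False
      have "c \<notin> C"
      proof
        assume "c \<in> C"
        hence "C \<inter> {c, e'} = {c}" using C(1) False by auto
        thus False using even by simp
      qed
      thus ?thesis using C(1) False by (auto simp: series_proj_def)
    qed (use C(1) in \<open>auto simp: series_proj_def\<close>)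
    ultimately show ?thesis by blast
  qed
  show ?thesis unfolding gf2_indep_iff_no_cycle using lift proj by blast
qed

(* Independent sets correspond via projection and the inverse
   lifting, which re-inserts e' (or c if e' is not available in X). *)

lemma series_ext_rank:
  assumes "c \<noteq> e'" "finite X"
  shows "gf2_rank (insert None (Some ` V)) (series_ext M c e') X =
           gf2_rank V M (series_proj c e' X) + (if X \<inter> {c, e'} = {} then 0 else 1)"
proof (rule gf2_rank_shift)
  show "finite X" "finite (series_proj c e' X)"
    using assms(2) by (simp_all add: series_proj_def)
next
  fix B assume B: "B \<subseteq> X" "gf2_indep (insert None (Some ` V)) (series_ext M c e') B"
  show "\<exists>B0\<subseteq>series_proj c e' X. gf2_indep V M B0 \<and>
          card B \<le> card B0 + (if X \<inter> {c, e'} = {} then 0 else 1)"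
  proof (intro exI conjI)
    show "series_proj c e' B \<subseteq> series_proj c e' X"
      using B(1) by (auto simp: series_proj_def)
    show "gf2_indep V M (series_proj c e' B)"
      using B(2) series_ext_indep[OF assms(1)] by blast
    show "card B \<le> card (series_proj c e' B) + (if X \<inter> {c, e'} = {} then 0 else 1)"
      using B(1) by (auto simp: series_proj_def card_Diff_singleton_if)
  qed
next
  fix B0 assume B0: "B0 \<subseteq> series_proj c e' X" "gf2_indep V M B0"
  define B where "B = (if e' \<in> X then insert e' B0 else if c \<in> X then insert c B0 else B0)"
  have "finite B0" using B0(1) by (rule finite_subset) (simp add: series_proj_def assms(2))
  have sub: "B \<subseteq> X" and proj: "series_proj c e' B = B0"
    using B0(1) assms(1) by (auto simp: B_def series_proj_def split: if_splits)
  have "gf2_indep (insert None (Some ` V)) (series_ext M c e') B"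
    using B0(2) by (simp add: series_ext_indep[OF assms(1)] proj)
  moreover have "card B = card B0 + (if X \<inter> {c, e'} = {} then 0 else 1)"
    using \<open>finite B0\<close> B0(1) assms(1)
    by (auto simp: B_def series_proj_def intro!: card_insert_disjoint)
  ultimately show "\<exists>B\<subseteq>X. gf2_indep (insert None (Some ` V)) (series_ext M c e') B \<and>
          card B = card B0 + (if X \<inter> {c, e'} = {} then 0 else 1)"
    using sub by blast
qed

lemma series_ext_rank_cases:
  assumes "c \<noteq> e'" "finite A" "c \<notin> A" "e' \<notin> A"
  shows "gf2_rank (insert None (Some ` V)) (series_ext M c e') A = gf2_rank V M A"
    and "gf2_rank (insert None (Some ` V)) (series_ext M c e') (insert c A) =
           gf2_rank V M A + 1"
    and "gf2_rank (insert None (Some ` V)) (series_ext M c e') (insert e' A) =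
           gf2_rank V M A + 1"
    and "gf2_rank (insert None (Some ` V)) (series_ext M c e') (insert e' (insert c A)) =
           gf2_rank V M (insert c A) + 1"
proof -
  have proj: "series_proj c e' A = A" "series_proj c e' (insert c A) = A"
    "series_proj c e' (insert e' A) = A" "series_proj c e' (insert e' (insert c A)) = insert c A"
    using assms(1,3,4) by (auto simp: series_proj_def)
  show "gf2_rank (insert None (Some ` V)) (series_ext M c e') A = gf2_rank V M A"
    and "gf2_rank (insert None (Some ` V)) (series_ext M c e') (insert c A) =
           gf2_rank V M A + 1"
    and "gf2_rank (insert None (Some ` V)) (series_ext M c e') (insert e' A) =
           gf2_rank V M A + 1"
    and "gf2_rank (insert None (Some ` V)) (series_ext M c e') (insert e' (insert c A)) =
           gf2_rank V M (insert c A) + 1"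
    using assms(2-4) by (simp_all add: series_ext_rank[OF assms(1)] proj)
qed

(* The relation 1 + q/gamma_c = (1 + q/gamma_1)(1 + q/gamma_2) in the form in which
   it is used: it converts the weight of c into the joint weight of c and e'. *)

lemma series_weight_identity:
  fixes q g g1 g2 :: real
  assumes "q \<noteq> 0" "g \<noteq> 0" "g1 \<noteq> 0" "g2 \<noteq> 0"
    and "1 + q / g = (1 + q / g1) * (1 + q / g2)"
  shows "(1 + g1 / q + g2 / q) * g = g1 * g2 / q"
proof -
  have "g1 * g2 * (g + q) = (1 + q / g) * (g * g1 * g2)"
    using assms(2) by (simp add: field_simps)
  also have "\<dots> = ((1 + q / g1) * (1 + q / g2)) * (g * g1 * g2)"
    using assms(5) by simp
  also have "\<dots> = g * (g1 + q) * (g2 + q)"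
    using assms(3,4) by (simp add: field_simps)
  finally have "g1 * g2 * (g + q) = g * (g1 + q) * (g2 + q)" .
  hence "q * (g * (q + g1 + g2)) = q * (g1 * g2)" by (simp add: algebra_simps)
  hence "g * (q + g1 + g2) = g1 * g2" using assms(1) by simp
  thus ?thesis using assms(1) by (simp add: field_simps)
qed

(* Tutte polynomial of the series extension, for E = E0 + c: each subset A of E0
   contributes the two terms A, A + c to Z(M) and the four terms A, A + c, A + e',
   A + c + e' to Z(M'), and the rank formulas match them up. *)

lemma tutte_Z_series_ext:
  fixes \<gamma> :: "'e \<Rightarrow> real"
  assumes "q \<noteq> 0" "finite E0" "c \<notin> E0" "e' \<notin> E0" "c \<noteq> e'"
    and weights: "(1 + \<gamma>1 / q + \<gamma>2 / q) * \<gamma> c = \<gamma>1 * \<gamma>2 / q"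
  shows "(1 + \<gamma>1 / q + \<gamma>2 / q) * tutte_Z V (insert c E0) M q \<gamma> =
           tutte_Z (insert None (Some ` V)) (insert e' (insert c E0)) (series_ext M c e') q
             (\<gamma>(c := \<gamma>1, e' := \<gamma>2))"
proof -
  let ?V' = "insert None (Some ` V)" and ?M' = "series_ext M c e'"
  let ?\<gamma>' = "\<gamma>(c := \<gamma>1, e' := \<gamma>2)" and ?K = "1 + \<gamma>1 / q + \<gamma>2 / q"
  let ?f = "\<lambda>A. inverse (q ^ gf2_rank V M A) * (\<Prod>e\<in>A. \<gamma> e)"
  let ?h = "\<lambda>A. inverse (q ^ gf2_rank ?V' ?M' A) * (\<Prod>e\<in>A. ?\<gamma>' e)"
  have e'E: "e' \<notin> insert c E0" using assms(4,5) by simp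
  have Z: "tutte_Z V (insert c E0) M q \<gamma> = (\<Sum>A\<in>Pow E0. ?f A + ?f (insert c A))"
    unfolding tutte_Z_def by (simp add: sum_Pow_insert[OF assms(2,3)] sum.distrib)
  have Z': "tutte_Z ?V' (insert e' (insert c E0)) ?M' q ?\<gamma>' =
      (\<Sum>A\<in>Pow E0. ?h A + ?h (insert c A) + ?h (insert e' A) + ?h (insert e' (insert c A)))"
    unfolding tutte_Z_def
    by (simp add: sum_Pow_insert[OF _ e'E] sum_Pow_insert[OF assms(2,3)] assms(2) sum.distrib
        add_ac)
  have "?K * (?f A + ?f (insert c A)) =
      ?h A + ?h (insert c A) + ?h (insert e' A) + ?h (insert e' (insert c A))"
    if "A \<in> Pow E0" for A
  proof -
    have A: "finite A" "c \<notin> A" "e' \<notin> A"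
      using that assms(2-4) finite_subset by auto
    define x where "x = inverse (q ^ gf2_rank V M A)"
    define y where "y = inverse (q ^ gf2_rank V M (insert c A))"
    define P where "P = (\<Prod>e\<in>A. \<gamma> e)"
    have "(\<Prod>e\<in>A. ?\<gamma>' e) = P" unfolding P_def using A by (intro prod.cong) auto
    hence h: "?h A = x * P" "?h (insert c A) = x / q * (\<gamma>1 * P)"
      "?h (insert e' A) = x / q * (\<gamma>2 * P)" "?h (insert e' (insert c A)) = y / q * (\<gamma>1 * \<gamma>2 * P)"
      using A assms(5)
      by (simp_all add: series_ext_rank_cases[OF assms(5) A] x_def y_def
          inverse_mult_distrib divide_inverse mult_ac)
    have f: "?f A = x * P" "?f (insert c A) = y * (\<gamma> c * P)"
      using A by (simp_all add: x_def y_def P_def)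
    have "?K * (?f A + ?f (insert c A)) = ?K * (x * P) + (?K * \<gamma> c) * (y * P)"
      unfolding f by (simp add: algebra_simps)
    also have "\<dots> = ?K * (x * P) + \<gamma>1 * \<gamma>2 / q * (y * P)"
      by (simp only: weights)
    also have "\<dots> = x * P + x / q * (\<gamma>1 * P) + x / q * (\<gamma>2 * P) + y / q * (\<gamma>1 * \<gamma>2 * P)"
      using assms(1) by (simp add: field_simps)
    finally show ?thesis unfolding h .
  qed
  thus ?thesis unfolding Z Z' sum_distrib_left by (intro sum.cong) auto
qed

theorem mainTheorem5:
  fixes V :: "'v set" and E :: "'e set" and M :: "'v \<Rightarrow> 'e \<Rightarrow> bool"
    and q \<gamma>1 \<gamma>2 :: real and \<gamma> :: "'e \<Rightarrow> real" and c e' :: 'e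
  assumes "q \<noteq> 0"
    and "finite V" and "finite E"
    and "c \<in> E" and "e' \<notin> E"
    and "\<gamma> c \<noteq> 0"
    and "\<gamma>1 > 0" and "\<gamma>2 > 0"
    and "1 + q / \<gamma> c = (1 + q / \<gamma>1) * (1 + q / \<gamma>2)"
  shows "\<exists>M' :: 'v option \<Rightarrow> 'e \<Rightarrow> bool.
           (1 + \<gamma>1 / q + \<gamma>2 / q) * tutte_Z V E M q \<gamma>
             = tutte_Z (insert None (Some ` V)) (insert e' E) M' q (\<gamma>(c := \<gamma>1, e' := \<gamma>2))"
proof
  have weights: "(1 + \<gamma>1 / q + \<gamma>2 / q) * \<gamma> c = \<gamma>1 * \<gamma>2 / q"
    using series_weight_identity assms(1,6-9) by simp
  have "c \<noteq> e'" using assms(4,5) by blast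
  have "(1 + \<gamma>1 / q + \<gamma>2 / q) * tutte_Z V (insert c (E - {c})) M q \<gamma> =
      tutte_Z (insert None (Some ` V)) (insert e' (insert c (E - {c}))) (series_ext M c e') q
        (\<gamma>(c := \<gamma>1, e' := \<gamma>2))"
    by (rule tutte_Z_series_ext) (use assms(1,3,5) \<open>c \<noteq> e'\<close> weights in auto)
  thus "(1 + \<gamma>1 / q + \<gamma>2 / q) * tutte_Z V E M q \<gamma>
      = tutte_Z (insert None (Some ` V)) (insert e' E) (series_ext M c e') q (\<gamma>(c := \<gamma>1, e' := \<gamma>2))"
    by (simp only: insert_Diff[OF assms(4)])
qed

end
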